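(* Let $\mathcal{D}$ be a distribution over $\mathcal{X}\times\mathcal{Y}$ where $\mathcal{Y}\subseteq\mathbb{R}^d$ and $\|y\|_\infty\le M$ for all $y\in\mathcal{Y}$, let $\alpha>0$, and let $\mathcal{T}$ be a bucketing with width $w=\sqrt{\alpha/M}$. If a model $h:\mathcal{X}\to\mathcal{Y}$ is $\alpha$-self-consistent, then \[\left|\mathbb{E}_{\mathcal{D}}[\pi_h(x)\cdot h(x)]-\mathbb{E}_{\mathcal{D}}[\pi_h(x)\cdot y]\right|\le 2d\sqrt{\alpha M}.\]
   Context: $\Omega\subseteq[0,1]^d$ is an arbitrary feasible set of actions; a policy is a map $\pi:\mathcal{X}\to\Omega$. For a model $h:\mathcal{X}\to\mathcal{Y}$, its induced policy is $\pi_h(x)=\arg\max_{a\in\Omega}a\cdot h(x)$. A bucketing $\mathcal{T}$ of width $w$ is a partition of $[0,1]$ into $1/w$ consecutive intervals $\tau$ of width $w$. A model $h$ is $\alpha$-consistent with respect to a collection $\mathcal{C}\subseteq 2^{\mathcal{X}}$ if for every $C\in\mathcal{C}$, $\|\mathbb{E}_{\mathcal{D}}[y-h(x)\mid x\in C]\|_\infty\le \alpha/\Pr[x\in C]$. The level sets of a policy $\pi$ are $\mathcal{C}^{\mathcal{T}}_\pi=\{\{x:\pi(x)_i\in\tau\}:i\in[d],\tau\in\mathcal{T}\}$. The model $h$ is $\alpha$-self-consistent if it is $\alpha$-consistent with respect to $\mathcal{C}^{\mathcal{T}}_{\pi_h}$. *)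

theory Defs
  imports "HOL-Probability.Probability"
begin

definition bucketing :: "real \<Rightarrow> real set set \<Rightarrow> bool" where
  "bucketing w T \<longleftrightarrow> finite T \<and> real (card T) * w = 1 \<and> \<Union>T = {0..1} \<and>
     (\<forall>\<tau>\<in>T. \<forall>\<tau>'\<in>T. \<tau> \<noteq> \<tau>' \<longrightarrow> \<tau> \<inter> \<tau>' = {}) \<and>
     (\<forall>\<tau>\<in>T. \<tau> \<noteq> {} \<and> is_interval \<tau> \<and> Sup \<tau> - Inf \<tau> = w)"

definition induced_policy :: "(real^'d) set \<Rightarrow> ('x \<Rightarrow> real^'d) \<Rightarrow> ('x \<Rightarrow> real^'d) \<Rightarrow> bool" where
  "induced_policy \<Omega> h \<pi> \<longleftrightarrow> (\<forall>x. \<pi> x \<in> \<Omega> \<and> (\<forall>a\<in>\<Omega>. a \<bullet> h x \<le> \<pi> x \<bullet> h x))"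

definition cond_exp :: "('x \<times> 'y) measure \<Rightarrow> ('x \<times> 'y \<Rightarrow> 'b::{banach,second_countable_topology}) \<Rightarrow> 'x set \<Rightarrow> 'b" where
  "cond_exp D f C = (1 / measure D {z \<in> space D. fst z \<in> C}) *\<^sub>R
       (\<integral>z. indicator {z. fst z \<in> C} z *\<^sub>R f z \<partial>D)"

definition consistent :: "real \<Rightarrow> ('x \<times> (real^'d)) measure \<Rightarrow> ('x \<Rightarrow> real^'d) \<Rightarrow> 'x set set \<Rightarrow> bool" where
  "consistent \<alpha> D h \<C> \<longleftrightarrow>
     (\<forall>C\<in>\<C>. infnorm (cond_exp D (\<lambda>z. snd z - h (fst z)) C) \<le> \<alpha> / measure D {z \<in> space D. fst z \<in> C})"

definition level_sets :: "('x \<Rightarrow> real^'d) \<Rightarrow> real set set \<Rightarrow> 'x set set" where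
  "level_sets \<pi> T = {{x. \<pi> x $ i \<in> \<tau>} | i \<tau>. \<tau> \<in> T}"

definition self_consistent :: "real \<Rightarrow> ('x \<times> (real^'d)) measure \<Rightarrow> real set set \<Rightarrow> ('x \<Rightarrow> real^'d) \<Rightarrow> ('x \<Rightarrow> real^'d) \<Rightarrow> bool" where
  "self_consistent \<alpha> D T h \<pi> \<longleftrightarrow> consistent \<alpha> D h (level_sets \<pi> T)"

end

(*
  Work one coordinate i at a time. Round pi_i to the midpoint of its bucket: this moves
  it by at most w/2, and h_i - y_i is bounded by 2M, so the rounding costs at most w M in
  expectation. The rounded coordinate is a combination, with coefficients in [0,1], of the
  indicators of the level sets {x. pi x $ i in tau}, and self-consistency bounds the bias
  E[1_C (h_i - y_i)] on each level set C by alpha; so the rounded term costs at most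
  |T| alpha = alpha / w. The choice w = sqrt (alpha / M) makes both terms sqrt (alpha M),
  and summing over the d coordinates gives 2 d sqrt (alpha M).
*)

theory Submission
  imports Defs
begin

definition bucket_mid :: "real set \<Rightarrow> real" where
  "bucket_mid \<tau> = (Sup \<tau> + Inf \<tau>) / 2"

text \<open>Written as a sum of indicators so that its integrals split over the level sets.\<close>
definition bucket_round :: "real set set \<Rightarrow> real \<Rightarrow> real" where
  "bucket_round T t = (\<Sum>\<tau>\<in>T. bucket_mid \<tau> * indicator \<tau> t)"

lemma bucketing_width_pos: "bucketing w T \<Longrightarrow> 0 < w"
  unfolding bucketing_def by (metis mult_nonneg_nonpos not_less of_nat_0_le_iff not_one_le_zero)

lemma bucketing_card_eq: "bucketing w T \<Longrightarrow> real (card T) = 1 / w"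
  unfolding bucketing_def by (auto simp: eq_divide_eq)

lemma bucket_bounds:
  assumes "bucketing w T" "\<tau> \<in> T" "t \<in> \<tau>"
  shows "0 \<le> Inf \<tau>" "Inf \<tau> \<le> t" "t \<le> Sup \<tau>" "Sup \<tau> \<le> 1" "Sup \<tau> - Inf \<tau> = w"
proof -
  have sub: "\<tau> \<subseteq> {0..1}" and width: "Sup \<tau> - Inf \<tau> = w"
    using assms(1,2) unfolding bucketing_def by auto
  then have "bdd_below \<tau>" "bdd_above \<tau>"
    by (meson atLeastAtMost_iff bdd_above.I bdd_below.I subset_iff)+
  then show "Inf \<tau> \<le> t" "t \<le> Sup \<tau>"
    using assms(3) by (auto intro: cInf_lower cSup_upper)
  have "\<tau> \<noteq> {}" using assms(3) by blast
  then show "0 \<le> Inf \<tau>" "Sup \<tau> \<le> 1"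
    using sub by (meson atLeastAtMost_iff cInf_greatest cSup_least subsetD)+
  show "Sup \<tau> - Inf \<tau> = w" by (fact width)
qed

lemma abs_bucket_mid_le_1:
  assumes "bucketing w T" "\<tau> \<in> T"
  shows "\<bar>bucket_mid \<tau>\<bar> \<le> 1"
proof -
  obtain t where "t \<in> \<tau>" using assms unfolding bucketing_def by blast
  from bucket_bounds[OF assms this] show ?thesis
    unfolding bucket_mid_def by argo
qed

lemma bucket_round_eq:
  assumes "bucketing w T" "\<tau> \<in> T" "t \<in> \<tau>"
  shows "bucket_round T t = bucket_mid \<tau>"
proof -
  have "t \<notin> \<tau>'" if "\<tau>' \<in> T" "\<tau>' \<noteq> \<tau>" for \<tau>'
    using assms that unfolding bucketing_def by blast
  then have "bucket_round T t = (\<Sum>\<tau>'\<in>T. if \<tau>' = \<tau> then bucket_mid \<tau> else 0)"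
    unfolding bucket_round_def using assms(3) by (intro sum.cong) auto
  also have "\<dots> = bucket_mid \<tau>"
    using assms(1,2) unfolding bucketing_def by simp
  finally show ?thesis .
qed

lemma abs_diff_bucket_round_le:
  assumes "bucketing w T" "t \<in> {0..1}"
  shows "\<bar>t - bucket_round T t\<bar> \<le> w / 2"
proof -
  obtain \<tau> where \<tau>: "\<tau> \<in> T" "t \<in> \<tau>"
    using assms unfolding bucketing_def by blast
  then show ?thesis
    using bucket_round_eq[OF assms(1) \<tau>] bucket_bounds[OF assms(1) \<tau>]
    unfolding bucket_mid_def by argo
qed

lemma consistent_infnorm_integral_le:
  fixes D :: "('x \<times> (real^'d)) measure"
  assumes "finite_measure D" "consistent \<alpha> D h \<C>" "C \<in> \<C>" "0 \<le> \<alpha>"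
    and C_sets: "{z \<in> space D. fst z \<in> C} \<in> sets D"
  shows "infnorm (\<integral>z. indicator {z. fst z \<in> C} z *\<^sub>R (snd z - h (fst z)) \<partial>D) \<le> \<alpha>"
proof -
  \<comment> \<open>When P = 0 the consistency bound reads 0 \<le> 0 (as 1 / 0 = 0) and says nothing;
    then the integrand vanishes almost everywhere instead.\<close>
  define P where "P = measure D {z \<in> space D. fst z \<in> C}"
  define v where "v = (\<integral>z. indicator {z. fst z \<in> C} z *\<^sub>R (snd z - h (fst z)) \<partial>D)"
  have consistency: "infnorm ((1 / P) *\<^sub>R v) \<le> \<alpha> / P"
    using assms(2,3) unfolding consistent_def cond_exp_def P_def v_def by blast
  consider "P > 0" | "P = 0"
    using measure_nonneg[of D] unfolding P_def by (metis less_eq_real_def)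
  then show ?thesis
  proof cases
    case 1
    then show ?thesis using consistency by (simp add: infnorm_mul field_simps v_def)
  next
    case 2
    then have "{z \<in> space D. fst z \<in> C} \<in> null_sets D"
      using finite_measure.emeasure_eq_measure[OF assms(1)] unfolding P_def
      by (intro null_setsI[OF _ C_sets]) simp
    then have "AE z in D. indicator {z. fst z \<in> C} z *\<^sub>R (snd z - h (fst z)) = 0"
      by (rule AE_I') (auto simp: indicator_def)
    then have "v = 0" unfolding v_def by (rule integral_eq_zero_AE)
    then show ?thesis using assms(4) by (simp add: v_def infnorm_0)
  qed
qed

lemma consistent_component_integral_le:
  fixes D :: "('x \<times> (real^'d)) measure"
  assumes "finite_measure D" "consistent \<alpha> D h \<C>" "C \<in> \<C>" "0 \<le> \<alpha>"
    and C_sets: "{z \<in> space D. fst z \<in> C} \<in> sets D"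
    and bias_integrable: "integrable D (\<lambda>z. snd z - h (fst z))"
  shows "\<bar>\<integral>z. indicator C (fst z) * (h (fst z) $ i - snd z $ i) \<partial>D\<bar> \<le> \<alpha>"
proof -
  let ?f = "\<lambda>z. indicator {z. fst z \<in> C} z *\<^sub>R (snd z - h (fst z))"
  have "integrable D (\<lambda>z. indicator {z \<in> space D. fst z \<in> C} z *\<^sub>R (snd z - h (fst z)))"
    using C_sets bias_integrable by (rule integrable_mult_indicator)
  then have "integrable D ?f"
    by (rule Bochner_Integration.integrable_cong[THEN iffD1, rotated -1]) (auto simp: indicator_def)
  then have "(\<integral>z. ?f z \<partial>D) $ i = (\<integral>z. ?f z $ i \<partial>D)"
    by (simp only: cart_eq_inner_axis integral_inner_left)
  also have "\<dots> = - (\<integral>z. indicator C (fst z) * (h (fst z) $ i - snd z $ i) \<partial>D)"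
    by (simp add: indicator_def algebra_simps flip: integral_minus)
  finally have "(\<integral>z. ?f z \<partial>D) $ i = - (\<integral>z. indicator C (fst z) * (h (fst z) $ i - snd z $ i) \<partial>D)" .
  then show ?thesis
    using consistent_infnorm_integral_le[OF assms(1-5)] component_le_infnorm_cart[of "\<integral>z. ?f z \<partial>D" i]
    by linarith
qed

lemma bucket_sets_borel: "bucketing w T \<Longrightarrow> \<tau> \<in> T \<Longrightarrow> \<tau> \<in> sets borel"
  unfolding bucketing_def by (blast intro: real_interval_borel_measurable)

lemma (in finite_measure) integral_bucket_round_le:
  fixes p e :: "'a \<Rightarrow> real"
  assumes T: "bucketing w T"
    and [measurable]: "p \<in> borel_measurable M" "e \<in> borel_measurable M"
    and e_bound: "\<forall>z\<in>space M. \<bar>e z\<bar> \<le> B"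
    and bucket: "\<And>\<tau>. \<tau> \<in> T \<Longrightarrow> \<bar>\<integral>z. indicator \<tau> (p z) * e z \<partial>M\<bar> \<le> \<alpha>"
  shows "integrable M (\<lambda>z. bucket_round T (p z) * e z)"
    and "\<bar>\<integral>z. bucket_round T (p z) * e z \<partial>M\<bar> \<le> real (card T) * \<alpha>"
proof -
  have bucket_integrable: "integrable M (\<lambda>z. indicator \<tau> (p z) * e z)" if "\<tau> \<in> T" for \<tau>
  proof (rule integrable_const_bound[where B = B])
    note [measurable] = bucket_sets_borel[OF T that]
    show "(\<lambda>z. indicator \<tau> (p z) * e z) \<in> borel_measurable M" by measurable
    have "norm (indicator \<tau> (p z) * e z) \<le> \<bar>e z\<bar>" for z by (simp add: indicator_def)
    then show "AE z in M. norm (indicator \<tau> (p z) * e z) \<le> B"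
      using e_bound by (intro AE_I2) (blast intro: order_trans)
  qed
  have expand: "(\<lambda>z. bucket_round T (p z) * e z) = (\<lambda>z. \<Sum>\<tau>\<in>T. bucket_mid \<tau> * (indicator \<tau> (p z) * e z))"
    by (simp add: bucket_round_def sum_distrib_right mult.assoc)
  show "integrable M (\<lambda>z. bucket_round T (p z) * e z)"
    unfolding expand using bucket_integrable by auto
  have "\<bar>\<integral>z. bucket_round T (p z) * e z \<partial>M\<bar>
      = \<bar>\<Sum>\<tau>\<in>T. bucket_mid \<tau> * (\<integral>z. indicator \<tau> (p z) * e z \<partial>M)\<bar>"
    unfolding expand using bucket_integrable by (subst Bochner_Integration.integral_sum) auto
  also have "\<dots> \<le> (\<Sum>\<tau>\<in>T. \<bar>bucket_mid \<tau>\<bar> * \<bar>\<integral>z. indicator \<tau> (p z) * e z \<partial>M\<bar>)"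
    by (rule order_trans[OF sum_abs]) (simp add: abs_mult)
  also have "\<dots> \<le> (\<Sum>\<tau>\<in>T. 1 * \<alpha>)"
    using abs_bucket_mid_le_1[OF T] bucket by (intro sum_mono mult_mono) auto
  finally show "\<bar>\<integral>z. bucket_round T (p z) * e z \<partial>M\<bar> \<le> real (card T) * \<alpha>"
    by simp
qed

lemma (in prob_space) bucketed_integral_le:
  fixes p e :: "'a \<Rightarrow> real"
  assumes T: "bucketing w T"
    and [measurable]: "p \<in> borel_measurable M" "e \<in> borel_measurable M"
    and p_range: "\<forall>z\<in>space M. p z \<in> {0..1}"
    and e_bound: "\<forall>z\<in>space M. \<bar>e z\<bar> \<le> B"
    and bucket: "\<And>\<tau>. \<tau> \<in> T \<Longrightarrow> \<bar>\<integral>z. indicator \<tau> (p z) * e z \<partial>M\<bar> \<le> \<alpha>"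
  shows "\<bar>\<integral>z. p z * e z \<partial>M\<bar> \<le> real (card T) * \<alpha> + w * B / 2"
proof -
  note round = integral_bucket_round_le[OF T assms(2,3) e_bound bucket]
  have pe_integrable: "integrable M (\<lambda>z. p z * e z)"
  proof (rule integrable_const_bound[where B = B])
    have "norm (p z * e z) \<le> \<bar>e z\<bar>" if "z \<in> space M" for z
      using p_range that by (simp add: abs_mult mult_left_le_one_le)
    then show "AE z in M. norm (p z * e z) \<le> B"
      using e_bound by (intro AE_I2) (blast intro: order_trans)
  qed measurable
  have rounding_error: "\<bar>p z * e z - bucket_round T (p z) * e z\<bar> \<le> w / 2 * B" if "z \<in> space M" for z
  proof -
    have "\<bar>p z * e z - bucket_round T (p z) * e z\<bar> = \<bar>p z - bucket_round T (p z)\<bar> * \<bar>e z\<bar>"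
      by (simp add: abs_mult flip: left_diff_distrib)
    also have "\<dots> \<le> w / 2 * B"
      using abs_diff_bucket_round_le[OF T] bucketing_width_pos[OF T] p_range e_bound that
      by (intro mult_mono) auto
    finally show ?thesis .
  qed
  have "\<bar>\<integral>z. p z * e z - bucket_round T (p z) * e z \<partial>M\<bar>
      \<le> (\<integral>z. \<bar>p z * e z - bucket_round T (p z) * e z\<bar> \<partial>M)"
    by (rule integral_abs_bound)
  also have "\<dots> \<le> w / 2 * B"
    using pe_integrable round(1) rounding_error by (intro integral_le_const) auto
  finally have "\<bar>\<integral>z. p z * e z - bucket_round T (p z) * e z \<partial>M\<bar> \<le> w * B / 2" by simp
  moreover have "(\<integral>z. p z * e z \<partial>M)
      = (\<integral>z. bucket_round T (p z) * e z \<partial>M) + (\<integral>z. p z * e z - bucket_round T (p z) * e z \<partial>M)"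
    using pe_integrable round(1) by simp
  ultimately show ?thesis using round(2) by linarith
qed

lemma self_consistent_bucket_integral_le:
  fixes D :: "('x \<times> (real^'d)) measure"
  assumes "finite_measure D" "self_consistent \<alpha> D T h \<pi>" "\<tau> \<in> T" "0 \<le> \<alpha>"
    and "{z \<in> space D. \<pi> (fst z) $ i \<in> \<tau>} \<in> sets D"
    and "integrable D (\<lambda>z. snd z - h (fst z))"
  shows "\<bar>\<integral>z. indicator \<tau> (\<pi> (fst z) $ i) * (h (fst z) $ i - snd z $ i) \<partial>D\<bar> \<le> \<alpha>"
proof -
  have level_set: "{x. \<pi> x $ i \<in> \<tau>} \<in> level_sets \<pi> T"
    using assms(3) unfolding level_sets_def by blast
  have "consistent \<alpha> D h (level_sets \<pi> T)"
    using assms(2) unfolding self_consistent_def .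
  then have "\<bar>\<integral>z. indicator {x. \<pi> x $ i \<in> \<tau>} (fst z) * (h (fst z) $ i - snd z $ i) \<partial>D\<bar> \<le> \<alpha>"
    by (rule consistent_component_integral_le[OF assms(1) _ level_set assms(4) _ assms(6)])
      (unfold mem_Collect_eq, fact assms(5))
  moreover have "indicator {x. \<pi> x $ i \<in> \<tau>} x = (indicator \<tau> (\<pi> x $ i) :: real)" for x
    by (simp add: indicator_def)
  ultimately show ?thesis by simp
qed

lemma self_consistent_coordinate_bias_le:
  fixes D :: "('x \<times> (real^'d)) measure" and h \<pi> :: "'x \<Rightarrow> real^'d"
  assumes D: "prob_space D" and T: "bucketing w T" and "0 \<le> \<alpha>" "self_consistent \<alpha> D T h \<pi>"
    and \<pi>_range: "\<forall>x. \<pi> x $ i \<in> {0..1}"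
    and bounds: "\<forall>z\<in>space D. \<bar>h (fst z) $ i\<bar> \<le> B \<and> \<bar>snd z $ i\<bar> \<le> B"
    and measurable: "(\<lambda>z. \<pi> (fst z)) \<in> borel_measurable D" "(\<lambda>z. h (fst z)) \<in> borel_measurable D"
      "snd \<in> borel_measurable D"
    and "integrable D (\<lambda>z. snd z - h (fst z))"
  shows "\<bar>\<integral>z. \<pi> (fst z) $ i * (h (fst z) $ i - snd z $ i) \<partial>D\<bar> \<le> \<alpha> / w + w * B"
proof -
  interpret prob_space D by (fact D)
  note [measurable] = measurable measurable[THEN measurable_compose, OF borel_measurable_nth]
  have "\<bar>\<integral>z. \<pi> (fst z) $ i * (h (fst z) $ i - snd z $ i) \<partial>D\<bar> \<le> real (card T) * \<alpha> + w * (2 * B) / 2"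
  proof (rule bucketed_integral_le[OF T])
    show "\<forall>z\<in>space D. \<bar>h (fst z) $ i - snd z $ i\<bar> \<le> 2 * B"
    proof
      fix z assume "z \<in> space D"
      then have "\<bar>h (fst z) $ i\<bar> \<le> B" "\<bar>snd z $ i\<bar> \<le> B" using bounds by auto
      then show "\<bar>h (fst z) $ i - snd z $ i\<bar> \<le> 2 * B" by linarith
    qed
    fix \<tau> assume "\<tau> \<in> T"
    note [measurable] = bucket_sets_borel[OF T this]
    have "{z \<in> space D. \<pi> (fst z) $ i \<in> \<tau>} \<in> sets D" by measurable
    then show "\<bar>\<integral>z. indicator \<tau> (\<pi> (fst z) $ i) * (h (fst z) $ i - snd z $ i) \<partial>D\<bar> \<le> \<alpha>"
      using assms(3,4,10) \<open>\<tau> \<in> T\<close> by (intro self_consistent_bucket_integral_le) auto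
  qed (measurable, measurable, use \<pi>_range in auto)
  then show ?thesis using bucketing_card_eq[OF T] by simp
qed

lemma (in finite_measure) integrable_infnorm_bounded:
  fixes f :: "'a \<Rightarrow> real^'d"
  assumes "f \<in> borel_measurable M" "\<forall>z\<in>space M. infnorm (f z) \<le> B"
  shows "integrable M f"
proof (rule integrable_const_bound[where B = "sqrt DIM(real^'d) * B"])
  show "AE z in M. norm (f z) \<le> sqrt DIM(real^'d) * B"
    using assms(2) norm_le_infnorm[of "f _"]
    by (intro AE_I2) (meson mult_left_mono order_trans real_sqrt_ge_zero of_nat_0_le_iff)
qed (fact assms(1))

lemma (in finite_measure) integral_inner_diff_eq_sum:
  fixes a u v :: "'a \<Rightarrow> real^'d"
  assumes [measurable]: "a \<in> borel_measurable M" "u \<in> borel_measurable M" "v \<in> borel_measurable M"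
    and bounds: "\<forall>z\<in>space M. \<forall>i. \<bar>a z $ i\<bar> \<le> 1 \<and> \<bar>u z $ i\<bar> \<le> B \<and> \<bar>v z $ i\<bar> \<le> B"
  shows "(\<integral>z. a z \<bullet> u z \<partial>M) - (\<integral>z. a z \<bullet> v z \<partial>M)
    = (\<Sum>i\<in>UNIV. \<integral>z. a z $ i * (u z $ i - v z $ i) \<partial>M)"
proof -
  have weighted_integrable: "integrable M (\<lambda>z. a z $ i * f z $ i)"
    if f: "f \<in> borel_measurable M" "\<forall>z\<in>space M. \<bar>f z $ i\<bar> \<le> B" for f :: "'a \<Rightarrow> real^'d" and i
  proof (rule integrable_const_bound[where B = B])
    note [measurable] = f(1)[THEN measurable_compose, OF borel_measurable_nth]
      assms(1)[THEN measurable_compose, OF borel_measurable_nth]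
    show "(\<lambda>z. a z $ i * f z $ i) \<in> borel_measurable M" by measurable
    show "AE z in M. norm (a z $ i * f z $ i) \<le> B"
    proof (rule AE_I2)
      fix z assume "z \<in> space M"
      then have "\<bar>a z $ i\<bar> * \<bar>f z $ i\<bar> \<le> 1 * B" using bounds f(2) by (intro mult_mono) auto
      then show "norm (a z $ i * f z $ i) \<le> B" by (simp add: abs_mult)
    qed
  qed
  have "integrable M (\<lambda>z. a z $ i * u z $ i)" "integrable M (\<lambda>z. a z $ i * v z $ i)" for i
    using bounds by (blast intro: weighted_integrable assms(2,3))+
  then show ?thesis
    by (simp add: inner_vec_def Bochner_Integration.integral_sum right_diff_distrib sum_subtractf)
qed

lemma div_add_mult_at_sqrt_ratio:
  fixes \<alpha> M w :: real
  assumes "0 < \<alpha>" "0 < w" "w = sqrt (\<alpha> / M)"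
  shows "\<alpha> / w + w * M = 2 * sqrt (\<alpha> * M)"
proof -
  have "0 < M" using assms by (metis real_sqrt_gt_0_iff zero_less_divide_iff not_less_iff_gr_or_eq)
  have w_eq: "w = sqrt \<alpha> / sqrt M" using assms(3) by (simp add: real_sqrt_divide)
  have "\<alpha> / w = (\<alpha> / sqrt \<alpha>) * sqrt M" using \<open>0 < M\<close> by (simp add: w_eq)
  also have "\<dots> = sqrt (\<alpha> * M)" using assms(1) by (simp add: real_div_sqrt real_sqrt_mult)
  finally have "\<alpha> / w = sqrt (\<alpha> * M)" .
  moreover have "w * M = sqrt \<alpha> * (M / sqrt M)" using \<open>0 < M\<close> by (simp add: w_eq)
  moreover have "\<dots> = sqrt (\<alpha> * M)" using \<open>0 < M\<close> by (simp add: real_div_sqrt real_sqrt_mult)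
  ultimately show ?thesis by simp
qed

theorem corollary1:
  fixes D :: "('x \<times> (real^'d)) measure" and Y :: "(real^'d) set"
    and M \<alpha> w :: real and T :: "real set set" and \<Omega> :: "(real^'d) set"
    and h \<pi> :: "'x \<Rightarrow> real^'d"
  assumes "prob_space D"
    and "\<forall>y\<in>Y. infnorm y \<le> M"
    and "\<forall>z\<in>space D. snd z \<in> Y"
    and "\<forall>x. h x \<in> Y"
    and "\<alpha> > 0"
    and "w = sqrt (\<alpha> / M)"
    and "bucketing w T"
    and "\<forall>a\<in>\<Omega>. \<forall>i. 0 \<le> a $ i \<and> a $ i \<le> 1"
    and "induced_policy \<Omega> h \<pi>"
    and "(\<lambda>z. h (fst z)) \<in> borel_measurable D"
    and "snd \<in> borel_measurable D"
    and "(\<lambda>z. \<pi> (fst z)) \<in> borel_measurable D"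
    and "self_consistent \<alpha> D T h \<pi>"
  shows "\<bar>(\<integral>z. \<pi> (fst z) \<bullet> h (fst z) \<partial>D) - (\<integral>z. \<pi> (fst z) \<bullet> snd z \<partial>D)\<bar>
           \<le> 2 * real CARD('d) * sqrt (\<alpha> * M)"
proof -
  interpret prob_space D by fact
  have \<pi>_range: "\<forall>x. \<pi> x $ i \<in> {0..1}" for i
    using assms(8,9) unfolding induced_policy_def by auto
  have infnorm_bounds: "\<forall>z\<in>space D. infnorm (snd z) \<le> M \<and> infnorm (h (fst z)) \<le> M"
    using assms(2-4) by blast
  then have coordinate_bounds: "\<forall>z\<in>space D. \<forall>i. \<bar>snd z $ i\<bar> \<le> M \<and> \<bar>h (fst z) $ i\<bar> \<le> M"
    using component_le_infnorm_cart order_trans by blast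
  have bias_integrable: "integrable D (\<lambda>z. snd z - h (fst z))"
    using infnorm_bounds
    by (intro Bochner_Integration.integrable_diff integrable_infnorm_bounded[OF assms(11)]
        integrable_infnorm_bounded[OF assms(10)]) auto
  have "\<bar>\<integral>z. \<pi> (fst z) $ i * (h (fst z) $ i - snd z $ i) \<partial>D\<bar> \<le> \<alpha> / w + w * M" for i
    using assms(5) coordinate_bounds
    by (intro self_consistent_coordinate_bias_le[OF assms(1,7) _ assms(13) \<pi>_range _ assms(12,10,11)
        bias_integrable]) auto
  then have "\<bar>\<Sum>i\<in>UNIV. \<integral>z. \<pi> (fst z) $ i * (h (fst z) $ i - snd z $ i) \<partial>D\<bar>
      \<le> (\<Sum>i\<in>(UNIV :: 'd set). 2 * sqrt (\<alpha> * M))"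
    using div_add_mult_at_sqrt_ratio[OF assms(5) bucketing_width_pos[OF assms(7)] assms(6)]
    by (intro order_trans[OF sum_abs sum_mono]) simp
  moreover have "(\<integral>z. \<pi> (fst z) \<bullet> h (fst z) \<partial>D) - (\<integral>z. \<pi> (fst z) \<bullet> snd z \<partial>D)
      = (\<Sum>i\<in>UNIV. \<integral>z. \<pi> (fst z) $ i * (h (fst z) $ i - snd z $ i) \<partial>D)"
    using \<pi>_range coordinate_bounds by (intro integral_inner_diff_eq_sum[OF assms(12,10,11)]) auto
  ultimately show ?thesis by simp
qed

end
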